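(* Let $(W,S)$ be a Coxeter group. Let $(s,t)\in\mathfrak{M}$ and $(u,v)\in\mathfrak{N}$, and let $q\in W$. Assume that $u\in qD_{s,t}q^{-1}$ and $v\in qD_{s,t}q^{-1}$. Then $m_{s,t}=m_{u,v}$.
   Context: $(W,S)$ is a Coxeter group (generators $S$, relations $(st)^{m_{s,t}}=1$ for $m_{s,t}<\infty$, $m_{s,s}=1$, $m_{s,t}=m_{t,s}\ge2$ for $s\neq t$). $\mathfrak{M}=\{(s,t)\in S\times S: s\ne t,\ m_{s,t}<\infty\}$; $\mathfrak{N}=\bigcup_{x\in W}\{(xsx^{-1},xtx^{-1}):(s,t)\in\mathfrak{M}\}$. For elements $u,v$ of $W$, $m_{u,v}$ denotes the order of $uv$; $D_{s,t}$ is the subgroup of $W$ generated by $s$ and $t$. *)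

theory Defs
  imports "HOL-Algebra.Algebra" "HOL-Library.Extended_Nat"
begin

definition elem_order :: "('w, 'x) monoid_scheme \<Rightarrow> 'w \<Rightarrow> enat" where
  "elem_order G x =
     (if \<exists>n::nat. n > 0 \<and> x [^]\<^bsub>G\<^esub> n = \<one>\<^bsub>G\<^esub> then enat (group.ord G x) else \<infinity>)"

definition coxeter_matrix :: "'w set \<Rightarrow> ('w \<Rightarrow> 'w \<Rightarrow> enat) \<Rightarrow> bool" where
  "coxeter_matrix S m \<longleftrightarrow>
     (\<forall>s\<in>S. m s s = 1) \<and>
     (\<forall>s\<in>S. \<forall>t\<in>S. m s t = m t s) \<and>
     (\<forall>s\<in>S. \<forall>t\<in>S. s \<noteq> t \<longrightarrow> m s t \<ge> 2)"

definition coxeter_relations_hold ::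
    "('h, 'y) monoid_scheme \<Rightarrow> 'w set \<Rightarrow> ('w \<Rightarrow> 'w \<Rightarrow> enat) \<Rightarrow> ('w \<Rightarrow> 'h) \<Rightarrow> bool" where
  "coxeter_relations_hold H S m f \<longleftrightarrow>
     (\<forall>s\<in>S. \<forall>t\<in>S. m s t \<noteq> \<infinity> \<longrightarrow>
        (f s \<otimes>\<^bsub>H\<^esub> f t) [^]\<^bsub>H\<^esub> (the_enat (m s t)) = \<one>\<^bsub>H\<^esub>)"

(* (G, S) is a Coxeter system with Coxeter matrix m, i.e. G has the presentation
   < S | (st)^{m s t} = 1, m s t < \<infinity> >:
   G is a group generated by S \<subseteq> G, the relations hold in G, and G has the universal
   property of the presented group: every assignment of S into a group H satisfying the
   relations extends to a homomorphism G \<rightarrow> H.  (Uniqueness is automatic since S generates G.)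
   The universal property is quantified over groups whose carrier has type 'w list; this is
   no restriction since the subgroup of H generated by f ` S has cardinality at most that
   of the words over S, so it embeds (isomorphically) into such a group. *)
definition coxeter_system :: "('w, 'x) monoid_scheme \<Rightarrow> 'w set \<Rightarrow> ('w \<Rightarrow> 'w \<Rightarrow> enat) \<Rightarrow> bool" where
  "coxeter_system G S m \<longleftrightarrow>
     group G \<and> S \<subseteq> carrier G \<and> generate G S = carrier G \<and>
     coxeter_matrix S m \<and>
     coxeter_relations_hold G S m id \<and>
     (\<forall>(H :: 'w list monoid) f. group H \<longrightarrow> f ` S \<subseteq> carrier H \<longrightarrow>
        coxeter_relations_hold H S m f \<longrightarrow>
        (\<exists>h \<in> hom G H. \<forall>s\<in>S. h s = f s))"

definition coxM :: "'w set \<Rightarrow> ('w \<Rightarrow> 'w \<Rightarrow> enat) \<Rightarrow> ('w \<times> 'w) set" where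
  "coxM S m = {(s, t). s \<in> S \<and> t \<in> S \<and> s \<noteq> t \<and> m s t < \<infinity>}"

definition coxN :: "('w, 'x) monoid_scheme \<Rightarrow> 'w set \<Rightarrow> ('w \<Rightarrow> 'w \<Rightarrow> enat) \<Rightarrow> ('w \<times> 'w) set" where
  "coxN G S m = (\<Union>x\<in>carrier G. {(x \<otimes>\<^bsub>G\<^esub> s \<otimes>\<^bsub>G\<^esub> inv\<^bsub>G\<^esub> x, x \<otimes>\<^bsub>G\<^esub> t \<otimes>\<^bsub>G\<^esub> inv\<^bsub>G\<^esub> x) | s t. (s, t) \<in> coxM S m})"

definition dihedral_sub :: "('w, 'x) monoid_scheme \<Rightarrow> 'w \<Rightarrow> 'w \<Rightarrow> 'w set" where
  "dihedral_sub G s t = generate G {s, t}"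

definition conj_set :: "('w, 'x) monoid_scheme \<Rightarrow> 'w \<Rightarrow> 'w set \<Rightarrow> 'w set" where
  "conj_set G q A = {q \<otimes>\<^bsub>G\<^esub> a \<otimes>\<^bsub>G\<^esub> inv\<^bsub>G\<^esub> q | a. a \<in> A}"

end

theory Submission
  imports Defs Complex_Main
begin

(*
  Write u = x s' x\<inverse> and v = x t' x\<inverse> with (s', t') \<in> coxM S m.  Then u v is conjugate to s' t',
  whose order is exactly m s' t': the lower bound on the order comes from Tits' geometric
  representation, in which s' t' acts on the coordinates s', t' as a rotation through 2\<pi>/m s' t'.
  So it suffices to show m s t = m s' t'.

  Put J = {s, t}, J' = {s', t'} and y = q\<inverse> x, so that conjugation by y maps J' into W_J = D_{s,t}.
  Choose d of minimal length in the double coset W_J y W_J'.  For r \<in> J' the element d r d\<inverse> again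
  lies in W_J, minimality gives l(d r) = l(d) + 1 and l(a d) = l(a) + l(d) for a \<in> W_J, and then
  (d r d\<inverse>) d = d r forces l(d r d\<inverse>) = 1, i.e. d r d\<inverse> \<in> J.  Thus d conjugates J' onto J, so s' t'
  is conjugate to s t or to t s, and m s' t' = m s t.

  The length estimates rest on the exchange condition, obtained from Tits' permutation
  representation of W on reflections \<times> {\<plusminus>1}: the parity of the number of occurrences of a
  reflection in the reflection sequence of a word depends only on the product of the word.
*)

definition list_prod :: "('a, 'b) monoid_scheme \<Rightarrow> 'a list \<Rightarrow> 'a" where
  "list_prod G xs = foldr (\<otimes>\<^bsub>G\<^esub>) xs \<one>\<^bsub>G\<^esub>"

lemma list_prod_Nil [simp]: "list_prod G [] = \<one>\<^bsub>G\<^esub>"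
  by (simp add: list_prod_def)

lemma list_prod_Cons [simp]: "list_prod G (x # xs) = x \<otimes>\<^bsub>G\<^esub> list_prod G xs"
  by (simp add: list_prod_def)

context monoid
begin

lemma list_prod_closed [simp]: "set xs \<subseteq> carrier G \<Longrightarrow> list_prod G xs \<in> carrier G"
  by (induct xs) auto

lemma list_prod_append:
  "set xs \<subseteq> carrier G \<Longrightarrow> set ys \<subseteq> carrier G \<Longrightarrow>
   list_prod G (xs @ ys) = list_prod G xs \<otimes> list_prod G ys"
  by (induct xs) (auto simp: m_assoc)

lemma list_prod_alternating:
  assumes "a \<in> carrier G" "b \<in> carrier G"
  shows "list_prod G (concat (replicate n [a, b])) = (a \<otimes> b) [^] n"
proof (induct n)
  case (Suc n)
  then show ?case
    using assms nat_pow_Suc2[of "a \<otimes> b" n] by (simp add: m_assoc)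
qed simp

end

lemma (in group_hom) hom_list_prod:
  "set xs \<subseteq> carrier G \<Longrightarrow> h (list_prod G xs) = list_prod H (map h xs)"
  by (induct xs) auto

context group
begin

lemma inv_cancel_left [simp]: "x \<in> carrier G \<Longrightarrow> y \<in> carrier G \<Longrightarrow> inv x \<otimes> (x \<otimes> y) = y"
  by (simp add: m_assoc[symmetric])

lemma cancel_inv_left [simp]: "x \<in> carrier G \<Longrightarrow> y \<in> carrier G \<Longrightarrow> x \<otimes> (inv x \<otimes> y) = y"
  by (simp add: m_assoc[symmetric])

lemma nat_pow_swap:
  "a \<in> carrier G \<Longrightarrow> b \<in> carrier G \<Longrightarrow> b \<otimes> (a \<otimes> b) [^] (n::nat) = (b \<otimes> a) [^] n \<otimes> b"
proof (induct n)
  case (Suc n)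
  have "b \<otimes> (a \<otimes> b) [^] Suc n = (b \<otimes> (a \<otimes> b) [^] n) \<otimes> (a \<otimes> b)"
    using Suc.prems by (simp add: m_assoc)
  also have "\<dots> = (b \<otimes> a) [^] Suc n \<otimes> b"
    using Suc by (simp add: m_assoc)
  finally show ?case .
qed simp

lemma generate_involutions_eq_words:
  assumes A: "A \<subseteq> carrier G" and inv: "\<And>a. a \<in> A \<Longrightarrow> a \<otimes> a = \<one>"
  shows "generate G A = list_prod G ` lists A"
proof
  show "generate G A \<subseteq> list_prod G ` lists A"
  proof
    fix h assume "h \<in> generate G A"
    then show "h \<in> list_prod G ` lists A"
    proof (induct rule: generate.induct)
      case one then show ?case by (auto intro: image_eqI[where x="[]"])
    next
      case (incl a) then show ?case using A by (auto intro!: image_eqI[where x="[a]"])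
    next
      case (inv a)
      then have "inv a = a" using A assms(2) by (auto intro: inv_equality)
      then show ?case using inv A by (auto intro!: image_eqI[where x="[a]"])
    next
      case (eng h1 h2)
      then obtain xs ys where "xs \<in> lists A" "ys \<in> lists A" "h1 = list_prod G xs" "h2 = list_prod G ys"
        by auto
      moreover have "set xs \<subseteq> carrier G" "set ys \<subseteq> carrier G" using \<open>xs \<in> lists A\<close> \<open>ys \<in> lists A\<close> A by auto
      ultimately show ?case by (auto intro!: image_eqI[where x="xs @ ys"] simp: list_prod_append)
    qed
  qed
next
  have "list_prod G xs \<in> generate G A" if "xs \<in> lists A" for xs
    using that by (induct xs) (auto intro: generate.one generate.eng generate.incl)
  then show "list_prod G ` lists A \<subseteq> generate G A" by blast
qed

lemma conj_nat_pow:
  assumes "g \<in> carrier G" "x \<in> carrier G"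
  shows "(g \<otimes> x \<otimes> inv g) [^] (k::nat) = g \<otimes> x [^] k \<otimes> inv g"
proof (induct k)
  case (Suc k)
  then show ?case using assms by (simp add: m_assoc)
qed (use assms in simp)

lemma elem_order_conj:
  assumes "g \<in> carrier G" "x \<in> carrier G"
  shows "elem_order G (g \<otimes> x \<otimes> inv g) = elem_order G x"
proof -
  have pow_iff: "(g \<otimes> x \<otimes> inv g) [^] (k::nat) = \<one> \<longleftrightarrow> x [^] k = \<one>" for k
    using assms by (simp add: conj_nat_pow inv_solve_right')
  then have "ord (g \<otimes> x \<otimes> inv g) = ord x"
    using assms by (simp add: ord_unique pow_eq_id)
  then show ?thesis unfolding elem_order_def using pow_iff by simp
qed

lemma elem_order_eqI:
  assumes x: "x \<in> carrier G" and "0 < n" "x [^] n = \<one>"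
    and minimal: "\<And>k. 0 < k \<Longrightarrow> k < n \<Longrightarrow> x [^] k \<noteq> \<one>"
  shows "elem_order G x = enat n"
proof -
  have "ord x = n"
  proof (rule antisym)
    show "ord x \<le> n" using assms by (simp add: pow_eq_id dvd_imp_le)
    have "0 < ord x" using assms ord_eq_0[OF x] by auto
    then show "n \<le> ord x" using minimal[of "ord x"] x by (meson not_le pow_ord_eq_1)
  qed
  then show ?thesis using assms by (auto simp: elem_order_def)
qed

lemma conj_generate_subset:
  assumes H: "subgroup H G" and y: "y \<in> carrier G" and A: "A \<subseteq> carrier G"
    and gens: "\<And>a. a \<in> A \<Longrightarrow> y \<otimes> a \<otimes> inv y \<in> H"
  shows "z \<in> generate G A \<Longrightarrow> y \<otimes> z \<otimes> inv y \<in> H"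
proof (induct rule: generate.induct)
  case one then show ?case using H y by (simp add: subgroup.one_closed)
next
  case (incl a) then show ?case by (rule gens)
next
  case (inv a)
  then have "y \<otimes> inv a \<otimes> inv y = inv (y \<otimes> a \<otimes> inv y)"
    using A y by (auto simp: inv_mult_group m_assoc)
  then show ?case using inv gens H by (simp add: subgroup.m_inv_closed)
next
  case (eng h1 h2)
  have "h1 \<in> carrier G" "h2 \<in> carrier G"
    using eng(1,3) A generate_in_carrier by auto
  then have "y \<otimes> (h1 \<otimes> h2) \<otimes> inv y = (y \<otimes> h1 \<otimes> inv y) \<otimes> (y \<otimes> h2 \<otimes> inv y)"
    using y by (simp add: m_assoc)
  then show ?case using eng H by (simp add: subgroup.m_closed)
qed

lemma conj_set_memD:
  "q \<in> carrier G \<Longrightarrow> A \<subseteq> carrier G \<Longrightarrow> z \<in> conj_set G q A \<Longrightarrow> inv q \<otimes> z \<otimes> q \<in> A"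
  by (auto simp: conj_set_def m_assoc)

end

lemma count_list_distinct: "distinct xs \<Longrightarrow> x \<in> set xs \<Longrightarrow> count_list xs x = 1"
  by (induct xs) (auto simp: count_list_0_iff)

lemma even_count_list_periodic:
  assumes "\<And>i. g (i + n) = g i"
  shows "even (count_list (map g [0..<2*n]) x)"
proof -
  have "[0..<2*n] = [0..<n] @ map (\<lambda>i. i + n) [0..<n]"
    by (simp add: mult_2 upt_add_eq_append[of 0 n n] map_add_upt)
  then have "map g [0..<2*n] = map g [0..<n] @ map g [0..<n]"
    using assms by (simp add: comp_def)
  then show ?thesis by simp
qed

lemma take_drop_Suc_append:
  "take j (xs @ ys) @ drop (Suc j) (xs @ ys) =
   (if j < length xs then (take j xs @ drop (Suc j) xs) @ ys
    else xs @ (take (j - length xs) ys @ drop (Suc (j - length xs)) ys))"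
  by (simp add: Suc_diff_le)

lemma set_take_drop_Suc_subset: "set (take j xs @ drop (Suc j) xs) \<subseteq> set xs"
  using set_take_subset[of j xs] set_drop_subset[of "Suc j" xs] by auto

lemma carrier_BijGroup [simp]: "carrier (BijGroup A) = Bij A"
  by (simp add: BijGroup_def)

lemma BijGroup_mult_apply:
  "f \<in> Bij A \<Longrightarrow> g \<in> Bij A \<Longrightarrow> x \<in> A \<Longrightarrow> (f \<otimes>\<^bsub>BijGroup A\<^esub> g) x = f (g x)"
  by (simp add: BijGroup_def compose_def)

lemma BijGroup_one_apply: "x \<in> A \<Longrightarrow> \<one>\<^bsub>BijGroup A\<^esub> x = x"
  by (simp add: BijGroup_def)

lemma BijGroup_eq_one:
  assumes "f \<in> Bij A" "\<And>x. x \<in> A \<Longrightarrow> f x = x"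
  shows "f = \<one>\<^bsub>BijGroup A\<^esub>"
  using assms by (intro extensionalityI[of _ A]) (auto simp: BijGroup_def Bij_def)

lemma BijGroup_UNIV_mult: "f \<in> Bij UNIV \<Longrightarrow> g \<in> Bij UNIV \<Longrightarrow> f \<otimes>\<^bsub>BijGroup UNIV\<^esub> g = f \<circ> g"
  by (simp add: BijGroup_def compose_def restrict_UNIV comp_def)

lemma BijGroup_UNIV_one: "\<one>\<^bsub>BijGroup UNIV\<^esub> = id"
  by (simp add: BijGroup_def id_def restrict_UNIV)

lemma BijGroup_UNIV_pow: "f \<in> Bij UNIV \<Longrightarrow> f [^]\<^bsub>BijGroup UNIV\<^esub> (n::nat) = f ^^ n"
proof (induct n)
  case (Suc n)
  then have "f ^^ n \<in> Bij UNIV"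
    using monoid.nat_pow_closed[OF group.is_monoid[OF group_BijGroup], of f UNIV n] by simp
  with Suc show ?case by (simp add: BijGroup_UNIV_mult funpow_Suc_right funpow_swap1)
qed (simp add: BijGroup_UNIV_one)

lemma transport_group:
  fixes g :: "'a \<Rightarrow> 'c"
  assumes G: "group G" and inj: "inj_on g (carrier G)"
  defines "G' \<equiv> \<lparr>carrier = g ` carrier G,
     monoid.mult = \<lambda>a b. g (inv_into (carrier G) g a \<otimes>\<^bsub>G\<^esub> inv_into (carrier G) g b), one = g \<one>\<^bsub>G\<^esub>\<rparr>"
  shows "group G'" and "g \<in> iso G G'"
proof -
  interpret group G by (rule G)
  show iso: "g \<in> iso G G'"
    using inj by (auto simp: iso_def hom_def bij_betw_def G'_def inv_into_f_f)
  have "monoid G'"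
    using hom_imp_img_monoid[OF iso_imp_homomorphism[OF iso]] by (simp add: G'_def)
  then show "group G'"
    using iso_imp_group[OF is_isoI[OF iso]] by blast
qed

lemma nat_pow_carrier_update [simp]: "pow (G\<lparr>carrier := K\<rparr>) x (n::nat) = pow G x n"
  by (simp add: nat_pow_def)

lemma generate_involutions_iso_words:
  fixes f :: "'a \<Rightarrow> 'h"
  assumes H: "group H" and f: "f ` A \<subseteq> carrier H"
    and inv: "\<And>a. a \<in> A \<Longrightarrow> f a \<otimes>\<^bsub>H\<^esub> f a = \<one>\<^bsub>H\<^esub>"
  obtains H' :: "'a list monoid" and \<phi>
  where "group H'" "\<phi> \<in> iso (H\<lparr>carrier := generate H (f ` A)\<rparr>) H'"
proof -
  interpret H: group H by (rule H)
  let ?K = "H\<lparr>carrier := generate H (f ` A)\<rparr>"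
  have "generate H (f ` A) = list_prod H ` lists (f ` A)"
    using f inv by (intro H.generate_involutions_eq_words) auto
  then have ex: "\<exists>xs. xs \<in> lists A \<and> list_prod H (map f xs) = k" if "k \<in> carrier ?K" for k
    using that by (auto simp: lists_image)
  define word where "word k = (SOME xs. xs \<in> lists A \<and> list_prod H (map f xs) = k)" for k
  have "list_prod H (map f (word k)) = k" if "k \<in> carrier ?K" for k
    using someI_ex[OF ex[OF that]] by (simp add: word_def)
  then have "inj_on word (carrier ?K)"
    by (rule inj_on_inverseI)
  moreover have "group ?K"
    using f by (intro H.subgroup_imp_group H.generate_is_subgroup)
  ultimately show ?thesis
    using transport_group that by blast
qed

lemma coxeter_relations_hold_involution:
  assumes "monoid H" "coxeter_matrix S m" "coxeter_relations_hold H S m f" "s \<in> S" "f s \<in> carrier H"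
  shows "f s \<otimes>\<^bsub>H\<^esub> f s = \<one>\<^bsub>H\<^esub>"
proof -
  have "m s s = 1" using assms(2,4) by (simp add: coxeter_matrix_def)
  moreover have "m s s \<noteq> \<infinity> \<longrightarrow> (f s \<otimes>\<^bsub>H\<^esub> f s) [^]\<^bsub>H\<^esub> the_enat (m s s) = \<one>\<^bsub>H\<^esub>"
    using assms(3,4) unfolding coxeter_relations_hold_def by blast
  ultimately show ?thesis
    using assms(1,5) by (simp add: one_enat_def monoid.nat_pow_eone monoid.m_closed)
qed

lemma (in group_hom) coxeter_relations_hold_compose:
  assumes "f ` S \<subseteq> carrier G" "coxeter_relations_hold G S m f"
  shows "coxeter_relations_hold H S m (h \<circ> f)"
  unfolding coxeter_relations_hold_def
proof (intro ballI impI)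
  fix s t assume st: "s \<in> S" "t \<in> S" "m s t \<noteq> \<infinity>"
  then have "(f s \<otimes>\<^bsub>G\<^esub> f t) [^]\<^bsub>G\<^esub> the_enat (m s t) = \<one>\<^bsub>G\<^esub>"
    using assms(2) by (simp add: coxeter_relations_hold_def)
  moreover have "f s \<in> carrier G" "f t \<in> carrier G" using assms(1) st by auto
  ultimately show "((h \<circ> f) s \<otimes>\<^bsub>H\<^esub> (h \<circ> f) t) [^]\<^bsub>H\<^esub> the_enat (m s t) = \<one>\<^bsub>H\<^esub>"
    by (metis comp_apply hom_mult hom_nat_pow hom_one G.m_closed)
qed

locale coxeter_group =
  fixes G :: "('w, 'x) monoid_scheme" (structure) and S :: "'w set" and m :: "'w \<Rightarrow> 'w \<Rightarrow> enat"
  assumes coxeter_system: "coxeter_system G S m"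
begin

sublocale group G
  using coxeter_system by (simp add: coxeter_system_def)

lemma gens_closed: "S \<subseteq> carrier G"
  using coxeter_system by (simp add: coxeter_system_def)

lemma gen_closed [intro, simp]: "s \<in> S \<Longrightarrow> s \<in> carrier G"
  using gens_closed by blast

lemma generate_gens: "generate G S = carrier G"
  using coxeter_system by (simp add: coxeter_system_def)

lemma coxeter_matrix: "coxeter_matrix S m"
  using coxeter_system by (simp add: coxeter_system_def)

lemma m_diag: "s \<in> S \<Longrightarrow> m s s = 1"
  using coxeter_matrix by (simp add: coxeter_matrix_def)

lemma m_sym: "s \<in> S \<Longrightarrow> t \<in> S \<Longrightarrow> m s t = m t s"
  using coxeter_matrix by (simp add: coxeter_matrix_def)

lemma m_ge_2: "s \<in> S \<Longrightarrow> t \<in> S \<Longrightarrow> s \<noteq> t \<Longrightarrow> 2 \<le> m s t"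
  using coxeter_matrix by (simp add: coxeter_matrix_def)

lemma coxeter_relation: "s \<in> S \<Longrightarrow> t \<in> S \<Longrightarrow> m s t = enat n \<Longrightarrow> (s \<otimes> t) [^] n = \<one>"
  using coxeter_system by (force simp: coxeter_system_def coxeter_relations_hold_def)

lemma gen_involution [simp]: "s \<in> S \<Longrightarrow> s \<otimes> s = \<one>"
  using coxeter_relations_hold_involution[of G S m id] coxeter_system
  by (simp add: coxeter_system_def is_monoid)

lemma inv_gen [simp]: "s \<in> S \<Longrightarrow> inv s = s"
  by (simp add: inv_equality)

lemma gen_cancel_left [simp]: "s \<in> S \<Longrightarrow> x \<in> carrier G \<Longrightarrow> s \<otimes> (s \<otimes> x) = x"
  by (simp add: m_assoc[symmetric])

lemma list_prod_gens_closed [simp]: "set xs \<subseteq> S \<Longrightarrow> list_prod G xs \<in> carrier G"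
  using gens_closed by (intro list_prod_closed) auto

lemma list_prod_append_gens:
  "set xs \<subseteq> S \<Longrightarrow> set ys \<subseteq> S \<Longrightarrow> list_prod G (xs @ ys) = list_prod G xs \<otimes> list_prod G ys"
  using gens_closed by (intro list_prod_append) auto

lemma generate_eq_words: "A \<subseteq> S \<Longrightarrow> generate G A = list_prod G ` lists A"
  using gens_closed by (intro generate_involutions_eq_words) auto

lemma carrier_eq_words: "carrier G = list_prod G ` lists S"
  using generate_eq_words[of S] generate_gens by simp

lemma parabolic_subgroup: "J \<subseteq> S \<Longrightarrow> subgroup (generate G J) G"
  using gens_closed by (intro generate_is_subgroup) auto

lemma universal_property_list:
  fixes H :: "'w list monoid"
  assumes "group H" "f ` S \<subseteq> carrier H" "coxeter_relations_hold H S m f"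
  shows "\<exists>h \<in> hom G H. \<forall>s\<in>S. h s = f s"
  using coxeter_system assms unfolding coxeter_system_def by blast

(* The universal property in coxeter_system only quantifies over groups on 'w list; the subgroup
   generated by f ` S is transported onto such a group along a choice of words. *)
lemma universal_property:
  fixes H :: "('h, 'y) monoid_scheme"
  assumes H: "group H" and f: "f ` S \<subseteq> carrier H" and rel: "coxeter_relations_hold H S m f"
  shows "\<exists>h \<in> hom G H. \<forall>s\<in>S. h s = f s"
proof -
  let ?K = "H\<lparr>carrier := generate H (f ` S)\<rparr>"
  have fK: "f s \<in> carrier ?K" if "s \<in> S" for s
    using that by (auto intro: generate.incl)
  have "f s \<otimes>\<^bsub>H\<^esub> f s = \<one>\<^bsub>H\<^esub>" if "s \<in> S" for s
    using coxeter_relations_hold_involution[OF group.is_monoid[OF H] coxeter_matrix rel that] f that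
    by blast
  then obtain H' :: "'w list monoid" and \<phi> where H': "group H'" and \<phi>: "\<phi> \<in> iso ?K H'"
    using generate_involutions_iso_words[OF H f] by blast
  have K: "group ?K"
    using f by (intro group.subgroup_imp_group[OF H] group.generate_is_subgroup[OF H])
  interpret \<phi>: group_hom ?K H' \<phi>
    using K H' \<phi> by (simp add: group_hom_def group_hom_axioms_def iso_imp_homomorphism)
  have "coxeter_relations_hold ?K S m f"
    using rel by (simp add: coxeter_relations_hold_def)
  then have "coxeter_relations_hold H' S m (\<phi> \<circ> f)"
    using fK by (intro \<phi>.coxeter_relations_hold_compose) auto
  moreover have "(\<phi> \<circ> f) ` S \<subseteq> carrier H'"
    using fK \<phi>.hom_closed by auto
  ultimately have "\<exists>h' \<in> hom G H'. \<forall>s\<in>S. h' s = (\<phi> \<circ> f) s"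
    by (rule universal_property_list[OF H', rotated])
  then obtain h' where h': "h' \<in> hom G H'" "\<And>s. s \<in> S \<Longrightarrow> h' s = \<phi> (f s)"
    by auto
  define \<psi> where "\<psi> = inv_into (carrier ?K) \<phi>"
  have "\<psi> \<in> hom H' ?K"
    using group.iso_set_sym[OF K \<phi>] unfolding \<psi>_def by (rule iso_imp_homomorphism)
  then have "compose (carrier G) \<psi> h' \<in> hom G ?K"
    using h'(1) by (rule hom_compose[rotated])
  then have "compose (carrier G) \<psi> h' \<in> hom G H"
    using group.generate_incl[OF H f] by (auto simp: hom_def)
  moreover have "compose (carrier G) \<psi> h' s = f s" if "s \<in> S" for s
    using that h'(2) fK \<phi> by (simp add: compose_def \<psi>_def iso_def bij_betw_def inv_into_f_f)
  ultimately show ?thesis by blast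
qed

end

section \<open>The reflection cocycle\<close>

context coxeter_group
begin

definition reflections :: "'w set" where
  "reflections = {g \<otimes> s \<otimes> inv g | g s. g \<in> carrier G \<and> s \<in> S}"

lemma reflection_closed [intro, simp]: "t \<in> reflections \<Longrightarrow> t \<in> carrier G"
  unfolding reflections_def by auto

lemma gen_in_reflections: "s \<in> S \<Longrightarrow> s \<in> reflections"
  unfolding reflections_def by (force intro: exI[of _ \<one>])

lemma conj_in_reflections:
  assumes "g \<in> carrier G" "t \<in> reflections"
  shows "g \<otimes> t \<otimes> inv g \<in> reflections"
proof -
  obtain h s where "t = h \<otimes> s \<otimes> inv h" "h \<in> carrier G" "s \<in> S"
    using assms(2) unfolding reflections_def by auto
  moreover have "g \<otimes> (h \<otimes> s \<otimes> inv h) \<otimes> inv g = (g \<otimes> h) \<otimes> s \<otimes> inv (g \<otimes> h)"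
    using calculation assms(1) by (simp add: m_assoc inv_mult_group)
  ultimately show ?thesis
    using assms(1) unfolding reflections_def by blast
qed

(* The i-th entry t of word_reflections xs satisfies list_prod G xs \<otimes> t = list_prod G (xs without its
   i-th letter). *)
primrec word_reflections :: "'w list \<Rightarrow> 'w list" where
  "word_reflections [] = []"
| "word_reflections (x # xs) = (inv (list_prod G xs) \<otimes> x \<otimes> list_prod G xs) # word_reflections xs"

lemma length_word_reflections [simp]: "length (word_reflections xs) = length xs"
  by (induct xs) auto

lemma word_reflections_in_reflections: "set xs \<subseteq> S \<Longrightarrow> set (word_reflections xs) \<subseteq> reflections"
proof (induct xs)
  case (Cons x xs)
  then have "inv (list_prod G xs) \<otimes> x \<otimes> inv (inv (list_prod G xs)) \<in> reflections"
    by (intro conj_in_reflections gen_in_reflections) auto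
  with Cons show ?case by simp
qed simp

lemma nth_word_reflections:
  "i < length xs \<Longrightarrow>
   word_reflections xs ! i = inv (list_prod G (drop (Suc i) xs)) \<otimes> xs ! i \<otimes> list_prod G (drop (Suc i) xs)"
  by (induct xs arbitrary: i) (auto simp: nth_Cons split: nat.split)

lemma word_reflections_alternating:
  assumes r: "r \<in> S" and r': "r' \<in> S"
  shows "word_reflections (concat (replicate n [r, r'])) = rev (map (\<lambda>i. (r' \<otimes> r) [^] i \<otimes> r') [0..<2*n])"
proof (induct n)
  case (Suc n)
  define d where "d = r' \<otimes> r"
  define P where "P = (r \<otimes> r') [^] n"
  have d: "d \<in> carrier G" and P: "P \<in> carrier G" using r r' by (simp_all add: d_def P_def)
  have invP: "inv P = d [^] n"
    using r r' by (simp add: P_def d_def nat_pow_inv[symmetric] inv_mult_group)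
  have swap: "r' \<otimes> P = d [^] n \<otimes> r'"
    using r r' by (simp add: P_def d_def nat_pow_swap)
  have inv_swap: "inv (d [^] n \<otimes> r') = d [^] n \<otimes> r'"
    using r' P by (simp add: swap[symmetric] inv_mult_group invP)
  have "inv (r' \<otimes> P) \<otimes> r \<otimes> (r' \<otimes> P) = d [^] n \<otimes> d \<otimes> d [^] n \<otimes> r'"
    unfolding swap inv_swap unfolding d_def using r r' by (simp add: m_assoc)
  also have "\<dots> = d [^] Suc n \<otimes> d [^] n \<otimes> r'"
    using d by simp
  also have "\<dots> = d [^] (2 * n + 1) \<otimes> r'"
    unfolding nat_pow_mult[OF d] by (simp add: mult_2)
  finally have first: "inv (r' \<otimes> P) \<otimes> r \<otimes> (r' \<otimes> P) = d [^] (2 * n + 1) \<otimes> r'" .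
  have "inv P \<otimes> r' \<otimes> P = d [^] n \<otimes> d [^] n \<otimes> r'"
    unfolding invP using r' d P by (simp add: m_assoc swap)
  then have second: "inv P \<otimes> r' \<otimes> P = d [^] (2 * n) \<otimes> r'"
    using d by (simp add: nat_pow_mult mult_2)
  have "word_reflections (concat (replicate (Suc n) [r, r'])) =
      (inv (r' \<otimes> P) \<otimes> r \<otimes> (r' \<otimes> P)) # (inv P \<otimes> r' \<otimes> P) # word_reflections (concat (replicate n [r, r']))"
    using r r' by (simp add: P_def list_prod_alternating)
  also have "\<dots> = rev (map (\<lambda>i. d [^] i \<otimes> r') [0..<2 * Suc n])"
    unfolding first second Suc d_def by simp
  finally show ?case unfolding d_def .
qed simp

lemma even_count_word_reflections_alternating:
  assumes "r \<in> S" "r' \<in> S" "(r \<otimes> r') [^] n = \<one>"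
  shows "even (count_list (word_reflections (concat (replicate n [r, r']))) t)"
proof -
  have "r' \<otimes> r = inv (r \<otimes> r')"
    using assms by (simp add: inv_mult_group)
  then have "(r' \<otimes> r) [^] n = \<one>"
    using assms by (simp add: nat_pow_inv)
  then have "(r' \<otimes> r) [^] (i + n) \<otimes> r' = (r' \<otimes> r) [^] i \<otimes> r'" for i
    using assms by (simp add: nat_pow_mult[symmetric])
  then show ?thesis
    unfolding word_reflections_alternating[OF assms(1,2)] count_list_rev
    by (rule even_count_list_periodic)
qed

abbreviation refl_perm_group :: "('w \<times> bool \<Rightarrow> 'w \<times> bool) monoid" where
  "refl_perm_group \<equiv> BijGroup (reflections \<times> UNIV)"

(* Tits' permutation representation on reflections \<times> {\<plusminus>1}, the sign being encoded as a boolean. *)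
definition refl_perm :: "'w \<Rightarrow> 'w \<times> bool \<Rightarrow> 'w \<times> bool" where
  "refl_perm r = (\<lambda>p \<in> reflections \<times> UNIV. (r \<otimes> fst p \<otimes> r, snd p \<noteq> (fst p = r)))"

lemma gen_conj_eq_iff: "r \<in> S \<Longrightarrow> t \<in> carrier G \<Longrightarrow> r \<otimes> t \<otimes> r = r \<longleftrightarrow> t = r"
  by (metis gen_cancel_left gen_closed gen_involution m_assoc m_closed r_one)

lemma refl_perm_Bij: assumes r: "r \<in> S" shows "refl_perm r \<in> Bij (reflections \<times> UNIV)"
proof -
  have into: "refl_perm r p \<in> reflections \<times> UNIV" if "p \<in> reflections \<times> UNIV" for p
    using that conj_in_reflections[of r] r by (auto simp: refl_perm_def)
  have invol: "refl_perm r (refl_perm r p) = p" if p_in: "p \<in> reflections \<times> UNIV" for p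
  proof -
    obtain t e where p: "p = (t, e)" "t \<in> reflections" using p_in by (cases p) auto
    have t: "t \<in> carrier G" using p(2) by blast
    have "r \<otimes> t \<otimes> r \<in> reflections" using conj_in_reflections[of r t] r p(2) by simp
    moreover have "r \<otimes> (r \<otimes> t \<otimes> r) \<otimes> r = t" using r t by (simp add: m_assoc)
    ultimately show ?thesis using p gen_conj_eq_iff[OF r t] by (auto simp: refl_perm_def)
  qed
  have "bij_betw (refl_perm r) (reflections \<times> UNIV) (reflections \<times> UNIV)"
    by (rule bij_betw_byWitness[where f'="refl_perm r"]) (use invol into in blast)+
  then show ?thesis unfolding Bij_def refl_perm_def by auto
qed

lemma list_prod_refl_perm_closed:
  "set xs \<subseteq> S \<Longrightarrow> list_prod refl_perm_group (map refl_perm xs) \<in> Bij (reflections \<times> UNIV)"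
  using monoid.list_prod_closed[OF group.is_monoid[OF group_BijGroup], of "map refl_perm xs"] refl_perm_Bij
  by auto

lemma list_prod_refl_perm:
  assumes "set xs \<subseteq> S" "t \<in> reflections"
  shows "list_prod refl_perm_group (map refl_perm xs) (t, e) =
    (list_prod G xs \<otimes> t \<otimes> inv (list_prod G xs), e \<noteq> odd (count_list (word_reflections xs) t))"
  using assms(1)
proof (induct xs arbitrary: e)
  case Nil
  have "t \<in> carrier G" using assms(2) by blast
  then show ?case using assms(2) by (simp add: BijGroup_one_apply)
next
  case (Cons x xs)
  define W where "W = list_prod G xs"
  have x: "x \<in> S" and xs: "set xs \<subseteq> S" using Cons.prems by auto
  have W: "W \<in> carrier G" using xs by (simp add: W_def)
  have t: "t \<in> carrier G" using assms(2) by blast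
  have conj_iff: "W \<otimes> t \<otimes> inv W = x \<longleftrightarrow> inv W \<otimes> x \<otimes> W = t"
    using W t x by (auto simp: m_assoc)
  have "list_prod refl_perm_group (map refl_perm (x # xs)) (t, e)
      = refl_perm x (W \<otimes> t \<otimes> inv W, e \<noteq> odd (count_list (word_reflections xs) t))"
    using Cons x xs assms(2)
    by (simp add: BijGroup_mult_apply refl_perm_Bij list_prod_refl_perm_closed W_def)
  also have "\<dots> = (list_prod G (x # xs) \<otimes> t \<otimes> inv (list_prod G (x # xs)),
                   e \<noteq> odd (count_list (word_reflections (x # xs)) t))"
    using conj_in_reflections[OF W assms(2)] conj_iff x W t
    by (auto simp: refl_perm_def W_def m_assoc inv_mult_group)
  finally show ?case .
qed

lemma refl_perm_relations: "coxeter_relations_hold refl_perm_group S m refl_perm"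
  unfolding coxeter_relations_hold_def
proof (intro ballI impI)
  fix r r' assume rr': "r \<in> S" "r' \<in> S" "m r r' \<noteq> \<infinity>"
  then obtain n where n: "m r r' = enat n" by auto
  let ?w = "concat (replicate n [r, r'])"
  interpret P: group refl_perm_group by (rule group_BijGroup)
  have w: "set ?w \<subseteq> S" using rr' by auto
  have "(refl_perm r \<otimes>\<^bsub>refl_perm_group\<^esub> refl_perm r') [^]\<^bsub>refl_perm_group\<^esub> n
      = list_prod refl_perm_group (map refl_perm ?w)"
    using rr' refl_perm_Bij by (simp add: P.list_prod_alternating map_concat)
  also have "\<dots> = \<one>\<^bsub>refl_perm_group\<^esub>"
  proof (rule BijGroup_eq_one)
    show "list_prod refl_perm_group (map refl_perm ?w) \<in> Bij (reflections \<times> UNIV)"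
      using w by (rule list_prod_refl_perm_closed)
    have "list_prod G ?w = \<one>"
      using rr' n by (simp add: list_prod_alternating coxeter_relation)
    then show "list_prod refl_perm_group (map refl_perm ?w) p = p" if "p \<in> reflections \<times> UNIV" for p
      using that w list_prod_refl_perm[OF w] even_count_word_reflections_alternating[OF rr'(1,2)]
        coxeter_relation[OF rr'(1,2) n] by (cases p) auto
  qed
  finally show "(refl_perm r \<otimes>\<^bsub>refl_perm_group\<^esub> refl_perm r') [^]\<^bsub>refl_perm_group\<^esub> the_enat (m r r')
      = \<one>\<^bsub>refl_perm_group\<^esub>" using n by simp
qed

lemma odd_count_word_reflections_eq:
  assumes xs: "set xs \<subseteq> S" and ys: "set ys \<subseteq> S" and eq: "list_prod G xs = list_prod G ys"
    and t: "t \<in> reflections"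
  shows "odd (count_list (word_reflections xs) t) \<longleftrightarrow> odd (count_list (word_reflections ys) t)"
proof -
  obtain \<rho> where \<rho>: "\<rho> \<in> hom G refl_perm_group" "\<And>s. s \<in> S \<Longrightarrow> \<rho> s = refl_perm s"
    using universal_property[OF group_BijGroup _ refl_perm_relations] refl_perm_Bij
    by (auto simp: BijGroup_def)
  interpret \<rho>: group_hom G refl_perm_group \<rho>
    using \<rho>(1) by (simp add: group_hom_def group_hom_axioms_def is_group group_BijGroup)
  have "\<rho> (list_prod G zs) = list_prod refl_perm_group (map refl_perm zs)" if "set zs \<subseteq> S" for zs
  proof -
    have "\<rho> (list_prod G zs) = list_prod refl_perm_group (map \<rho> zs)"
      using that gens_closed by (intro \<rho>.hom_list_prod) auto
    also have "map \<rho> zs = map refl_perm zs" using that \<rho>(2) by auto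
    finally show ?thesis .
  qed
  then have "list_prod refl_perm_group (map refl_perm xs) (t, False)
      = list_prod refl_perm_group (map refl_perm ys) (t, False)"
    using xs ys eq by metis
  then show ?thesis using list_prod_refl_perm xs ys t by simp
qed

end

section \<open>Length, reduced words and minimal coset representatives\<close>

context coxeter_group
begin

definition word_length :: "'w \<Rightarrow> nat" where
  "word_length w = (LEAST n. \<exists>xs. set xs \<subseteq> S \<and> length xs = n \<and> list_prod G xs = w)"

definition reduced_word :: "'w list \<Rightarrow> bool" where
  "reduced_word xs \<longleftrightarrow> set xs \<subseteq> S \<and> word_length (list_prod G xs) = length xs"

lemma word_length_le: "set xs \<subseteq> S \<Longrightarrow> word_length (list_prod G xs) \<le> length xs"
  unfolding word_length_def by (rule Least_le) blast

lemma obtain_reduced_word: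
  assumes "w \<in> carrier G"
  obtains xs where "reduced_word xs" "list_prod G xs = w"
proof -
  have "\<exists>n xs. set xs \<subseteq> S \<and> length xs = n \<and> list_prod G xs = w"
    using assms carrier_eq_words by auto
  then have "\<exists>xs. set xs \<subseteq> S \<and> length xs = word_length w \<and> list_prod G xs = w"
    unfolding word_length_def by (rule LeastI_ex)
  then obtain xs where "set xs \<subseteq> S" "length xs = word_length w" "list_prod G xs = w" by blast
  then show ?thesis using that[of xs] by (simp add: reduced_word_def)
qed

lemma distinct_word_reflections_imp_reduced:
  assumes xs: "set xs \<subseteq> S" and distinct: "distinct (word_reflections xs)"
  shows "reduced_word xs"
proof -
  obtain ys where ys: "reduced_word ys" "list_prod G ys = list_prod G xs"
    using obtain_reduced_word[of "list_prod G xs"] xs by auto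
  have ysS: "set ys \<subseteq> S" using ys(1) by (simp add: reduced_word_def)
  have "set (word_reflections xs) \<subseteq> set (word_reflections ys)"
  proof
    fix t assume t: "t \<in> set (word_reflections xs)"
    then have tR: "t \<in> reflections" using word_reflections_in_reflections[OF xs] by auto
    have "count_list (word_reflections xs) t = 1" using count_list_distinct[OF distinct t] .
    then have "odd (count_list (word_reflections ys) t)"
      using odd_count_word_reflections_eq[OF xs ysS ys(2)[symmetric] tR] by simp
    then show "t \<in> set (word_reflections ys)"
      by (metis count_list_0_iff even_zero)
  qed
  then have "card (set (word_reflections xs)) \<le> card (set (word_reflections ys))"
    by (simp add: card_mono)
  also have "\<dots> \<le> length ys"
    using card_length[of "word_reflections ys"] by simp
  finally have "length xs \<le> length ys"
    using distinct_card[OF distinct] by simp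
  then show ?thesis
    using ys word_length_le[OF xs] by (simp add: reduced_word_def xs)
qed

lemma list_prod_delete:
  assumes xs: "set xs \<subseteq> S" and x: "x \<in> S" and j: "j < length xs"
    and refl: "inv (list_prod G xs) \<otimes> x \<otimes> list_prod G xs = word_reflections xs ! j"
  shows "x \<otimes> list_prod G xs = list_prod G (take j xs @ drop (Suc j) xs)"
proof -
  define P where "P = list_prod G (take j xs)"
  define Q where "Q = list_prod G (drop (Suc j) xs)"
  define b where "b = xs ! j"
  have takeS: "set (take j xs) \<subseteq> S" and dropS: "set (drop (Suc j) xs) \<subseteq> S"
    using xs by (meson order_trans set_take_subset set_drop_subset)+
  have b: "b \<in> S" using xs j by (auto simp: b_def)
  have PQ: "P \<in> carrier G" "Q \<in> carrier G" using takeS dropS by (simp_all add: P_def Q_def)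
  have "list_prod G xs = list_prod G (take j xs @ b # drop (Suc j) xs)"
    using j by (simp add: b_def id_take_nth_drop[symmetric])
  then have W: "list_prod G xs = P \<otimes> b \<otimes> Q"
    using takeS dropS b PQ by (simp add: list_prod_append_gens P_def Q_def m_assoc)
  have "inv Q \<otimes> (inv (P \<otimes> b) \<otimes> x \<otimes> (P \<otimes> b)) \<otimes> Q = inv Q \<otimes> b \<otimes> Q"
    using refl nth_word_reflections[OF j] PQ b x
    by (simp add: W inv_mult_group m_assoc P_def Q_def b_def)
  then have "inv (P \<otimes> b) \<otimes> x \<otimes> (P \<otimes> b) = b"
    using PQ b x by simp
  then have xPb: "x \<otimes> (P \<otimes> b) = P"
    using PQ b x by (simp add: m_assoc inv_mult_group inv_solve_left')
  have "x \<otimes> list_prod G xs = (x \<otimes> (P \<otimes> b)) \<otimes> Q"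
    unfolding W using PQ b x by (simp add: m_assoc)
  also have "\<dots> = list_prod G (take j xs @ drop (Suc j) xs)"
    using xPb takeS dropS by (simp add: list_prod_append_gens P_def Q_def)
  finally show ?thesis .
qed

lemma deletion_condition:
  assumes "set xs \<subseteq> S" "\<not> distinct (word_reflections xs)"
  shows "\<exists>ys. set ys \<subseteq> set xs \<and> length ys + 2 = length xs \<and> list_prod G ys = list_prod G xs"
  using assms
proof (induct xs)
  case (Cons x xs)
  then have x: "x \<in> S" and xs: "set xs \<subseteq> S" by auto
  show ?case
  proof (cases "distinct (word_reflections xs)")
    case False
    then obtain ys where "set ys \<subseteq> set xs" "length ys + 2 = length xs" "list_prod G ys = list_prod G xs"
      using Cons xs by auto
    then show ?thesis by (intro exI[where x="x # ys"]) auto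
  next
    case True
    then have "inv (list_prod G xs) \<otimes> x \<otimes> list_prod G xs \<in> set (word_reflections xs)"
      using Cons.prems(2) by simp
    then obtain j where j: "j < length xs"
      "inv (list_prod G xs) \<otimes> x \<otimes> list_prod G xs = word_reflections xs ! j"
      by (auto simp: in_set_conv_nth)
    let ?ys = "take j xs @ drop (Suc j) xs"
    have "set ?ys \<subseteq> set (x # xs)"
      using set_take_drop_Suc_subset[of j xs] by auto
    moreover have "length ?ys + 2 = length (x # xs)" using j(1) by simp
    moreover have "list_prod G ?ys = list_prod G (x # xs)"
      using list_prod_delete[OF xs x j] by simp
    ultimately show ?thesis by blast
  qed
qed simp

lemma reduced_word_iff_distinct:
  assumes "set xs \<subseteq> S"
  shows "reduced_word xs \<longleftrightarrow> distinct (word_reflections xs)"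
proof
  assume reduced: "reduced_word xs"
  show "distinct (word_reflections xs)"
  proof (rule ccontr)
    assume "\<not> distinct (word_reflections xs)"
    then obtain ys where "set ys \<subseteq> set xs" "length ys + 2 = length xs" "list_prod G ys = list_prod G xs"
      using deletion_condition assms by blast
    then show False
      using reduced word_length_le[of ys] assms by (auto simp: reduced_word_def)
  qed
qed (rule distinct_word_reflections_imp_reduced[OF assms])

lemma reduced_word_Cons:
  assumes "reduced_word (x # xs)"
  shows "reduced_word xs"
proof -
  have S: "set (x # xs) \<subseteq> S" using assms by (simp add: reduced_word_def)
  then have "distinct (word_reflections (x # xs))" using assms reduced_word_iff_distinct by blast
  then show ?thesis using S reduced_word_iff_distinct[of xs] by simp
qed

lemma exchange_condition:
  assumes xs: "reduced_word xs" and x: "x \<in> S" and not_reduced: "\<not> reduced_word (x # xs)"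
  obtains j where "j < length xs" "x \<otimes> list_prod G xs = list_prod G (take j xs @ drop (Suc j) xs)"
proof -
  have xsS: "set xs \<subseteq> S" using xs by (simp add: reduced_word_def)
  have "distinct (word_reflections xs)" "\<not> distinct (word_reflections (x # xs))"
    using reduced_word_iff_distinct xs not_reduced x xsS by auto
  then have "inv (list_prod G xs) \<otimes> x \<otimes> list_prod G xs \<in> set (word_reflections xs)" by simp
  then obtain j where "j < length xs" "inv (list_prod G xs) \<otimes> x \<otimes> list_prod G xs = word_reflections xs ! j"
    by (auto simp: in_set_conv_nth)
  then show ?thesis using that list_prod_delete[OF xsS x] by blast
qed

lemma even_length_iff_even_word_length:
  "set xs \<subseteq> S \<Longrightarrow> even (length xs) \<longleftrightarrow> even (word_length (list_prod G xs))"
proof (induct "length xs" arbitrary: xs rule: less_induct)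
  case less
  show ?case
  proof (cases "reduced_word xs")
    case True then show ?thesis by (simp add: reduced_word_def)
  next
    case False
    then obtain ys where ys: "set ys \<subseteq> set xs" "length ys + 2 = length xs" "list_prod G ys = list_prod G xs"
      using deletion_condition reduced_word_iff_distinct less.prems by blast
    then have "even (length ys) \<longleftrightarrow> even (word_length (list_prod G ys))"
      using less by auto
    moreover have "even (length xs) \<longleftrightarrow> even (length ys)"
      using ys(2) by (metis even_add even_numeral)
    ultimately show ?thesis using ys(3) by simp
  qed
qed

lemma word_length_mult_le:
  assumes "a \<in> carrier G" "b \<in> carrier G"
  shows "word_length (a \<otimes> b) \<le> word_length a + word_length b"
proof -
  obtain xs where "reduced_word xs" "list_prod G xs = a" using obtain_reduced_word assms(1) .
  moreover obtain ys where "reduced_word ys" "list_prod G ys = b" using obtain_reduced_word assms(2) .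
  ultimately show ?thesis
    using word_length_le[of "xs @ ys"] by (auto simp: reduced_word_def list_prod_append_gens)
qed

lemma word_length_mult_gen:
  assumes w: "w \<in> carrier G" and s: "s \<in> S"
  shows "word_length (w \<otimes> s) = Suc (word_length w) \<or> Suc (word_length (w \<otimes> s)) = word_length w"
proof -
  obtain xs where xs: "reduced_word xs" "list_prod G xs = w"
    using obtain_reduced_word w by blast
  then have xsS: "set (xs @ [s]) \<subseteq> S" using s by (simp add: reduced_word_def)
  have prod: "list_prod G (xs @ [s]) = w \<otimes> s"
    using xs s by (simp add: reduced_word_def list_prod_append_gens)
  have "even (word_length w) \<longleftrightarrow> odd (word_length (w \<otimes> s))"
    using even_length_iff_even_word_length[OF xsS] xs by (auto simp: prod reduced_word_def)
  then have "word_length (w \<otimes> s) \<noteq> word_length w" by auto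
  moreover have "word_length (w \<otimes> s) \<le> Suc (word_length w)"
    using word_length_le[OF xsS] xs by (simp add: prod reduced_word_def)
  moreover have "word_length w \<le> Suc (word_length (w \<otimes> s))"
    using word_length_mult_le[of "w \<otimes> s" s] word_length_le[of "[s]"] w s by (simp add: m_assoc)
  ultimately show ?thesis by arith
qed

lemma obtain_reduced_parabolic_word:
  assumes J: "J \<subseteq> S" and w: "w \<in> generate G J"
  obtains xs where "set xs \<subseteq> J" "reduced_word xs" "list_prod G xs = w"
proof -
  obtain xs0 where "set xs0 \<subseteq> J \<and> list_prod G xs0 = w"
    using generate_eq_words[OF J] w by auto
  then obtain xs where xs: "set xs \<subseteq> J \<and> list_prod G xs = w"
    and shortest: "\<forall>ys. set ys \<subseteq> J \<and> list_prod G ys = w \<longrightarrow> length xs \<le> length ys"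
    using ex_has_least_nat[of "\<lambda>xs. set xs \<subseteq> J \<and> list_prod G xs = w" xs0 length] by blast
  have xsS: "set xs \<subseteq> S" using xs(1) J by blast
  have "reduced_word xs"
  proof (rule ccontr)
    assume "\<not> reduced_word xs"
    then obtain ys where "set ys \<subseteq> set xs" "length ys + 2 = length xs" "list_prod G ys = list_prod G xs"
      using deletion_condition[OF xsS] reduced_word_iff_distinct[OF xsS] by blast
    then show False using shortest xs by fastforce
  qed
  then show ?thesis using that xs by blast
qed

lemma list_prod_delete_append:
  assumes "set as \<subseteq> S" "set ds \<subseteq> S"
  shows "list_prod G (take j (as @ ds) @ drop (Suc j) (as @ ds)) =
    (if j < length as then list_prod G (take j as @ drop (Suc j) as) \<otimes> list_prod G ds
     else list_prod G as \<otimes> list_prod G (take (j - length as) ds @ drop (Suc (j - length as)) ds))"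
proof (cases "j < length as")
  case True
  have "set (take j as @ drop (Suc j) as) \<subseteq> S" using assms(1) set_take_drop_Suc_subset[of j as] by blast
  then show ?thesis
    using True assms(2) list_prod_append_gens[of "take j as @ drop (Suc j) as" ds]
    by (simp add: take_drop_Suc_append)
next
  case False
  let ?ds' = "take (j - length as) ds @ drop (Suc (j - length as)) ds"
  have "set ?ds' \<subseteq> S" using assms(2) set_take_drop_Suc_subset[of "j - length as" ds] by blast
  then show ?thesis
    using False assms(1) list_prod_append_gens[of as ?ds'] by (simp add: take_drop_Suc_append Suc_diff_le)
qed

(* By the exchange condition x deletes a letter of as @ ds: a letter of as would contradict
   reducedness of x # as, a letter of ds the minimality of list_prod G ds in its coset. *)
lemma reduced_word_Cons_append_minimal:
  assumes J: "J \<subseteq> S" and ds: "reduced_word ds"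
    and minimal: "\<And>a. a \<in> generate G J \<Longrightarrow> word_length (list_prod G ds) \<le> word_length (a \<otimes> list_prod G ds)"
    and xas: "set (x # as) \<subseteq> J" "reduced_word (x # as)" and asds: "reduced_word (as @ ds)"
  shows "reduced_word (x # as @ ds)"
proof (rule ccontr)
  define a where "a = list_prod G as"
  define d where "d = list_prod G ds"
  have x: "x \<in> S" and asS: "set as \<subseteq> S" and dsS: "set ds \<subseteq> S"
    using xas J ds by (auto simp: reduced_word_def)
  then have a: "a \<in> carrier G" and d: "d \<in> carrier G" by (simp_all add: a_def d_def)
  assume "\<not> reduced_word (x # as @ ds)"
  then obtain j where j: "j < length (as @ ds)"
    "x \<otimes> list_prod G (as @ ds) = list_prod G (take j (as @ ds) @ drop (Suc j) (as @ ds))"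
    using exchange_condition[OF asds x] by blast
  let ?as' = "take j as @ drop (Suc j) as"
  let ?ds' = "take (j - length as) ds @ drop (Suc (j - length as)) ds"
  have "list_prod G (as @ ds) = a \<otimes> d"
    using asS dsS by (simp add: list_prod_append_gens a_def d_def)
  with j(2) have del: "x \<otimes> (a \<otimes> d) = (if j < length as then list_prod G ?as' \<otimes> d else a \<otimes> list_prod G ?ds')"
    unfolding list_prod_delete_append[OF asS dsS] by (simp add: a_def d_def)
  show False
  proof (cases "j < length as")
    case True
    have as'S: "set ?as' \<subseteq> S" using asS set_take_drop_Suc_subset[of j as] by blast
    have "x \<otimes> a \<otimes> d = list_prod G ?as' \<otimes> d"
      using del True x a d by (simp add: m_assoc)
    then have "word_length (list_prod G (x # as)) \<le> length ?as'"
      using x a d as'S word_length_le[OF as'S] by (simp add: a_def)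
    then show False using xas(2) True by (simp add: reduced_word_def)
  next
    case False
    have ds'S: "set ?ds' \<subseteq> S" using dsS set_take_drop_Suc_subset[of "j - length as" ds] by blast
    have "(inv a \<otimes> x \<otimes> a) \<otimes> d = list_prod G ?ds'"
      using del False x a d ds'S by (simp add: m_assoc)
    moreover have "a \<in> generate G J" "x \<in> generate G J"
      using generate_eq_words[OF J] xas(1) by (auto simp: a_def intro: generate.incl)
    then have "inv a \<otimes> x \<otimes> a \<in> generate G J"
      using parabolic_subgroup[OF J] by (simp add: subgroup.m_closed subgroup.m_inv_closed)
    ultimately have "word_length d \<le> length ?ds'"
      using minimal[of "inv a \<otimes> x \<otimes> a"] word_length_le[OF ds'S] by (simp add: d_def)
    also have "\<dots> < word_length d" using False j(1) ds by (simp add: reduced_word_def d_def)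
    finally show False by simp
  qed
qed

lemma word_length_mult_minimal_coset_rep:
  assumes J: "J \<subseteq> S" and d: "d \<in> carrier G"
    and minimal: "\<And>a. a \<in> generate G J \<Longrightarrow> word_length d \<le> word_length (a \<otimes> d)"
    and a: "a \<in> generate G J"
  shows "word_length (a \<otimes> d) = word_length a + word_length d"
proof -
  obtain ds where ds: "reduced_word ds" "list_prod G ds = d" using obtain_reduced_word d .
  obtain as where as: "set as \<subseteq> J" "reduced_word as" "list_prod G as = a"
    using obtain_reduced_parabolic_word[OF J a] .
  have "reduced_word (as @ ds)"
    using as(1,2)
  proof (induct as)
    case (Cons x as)
    then show ?case
      using reduced_word_Cons_append_minimal[OF J ds(1)] minimal ds(2) reduced_word_Cons by simp
  qed (use ds in simp)
  then show ?thesis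
    using as ds J by (auto simp: reduced_word_def list_prod_append_gens)
qed

lemma minimal_coset_rep_conj_gen:
  assumes J: "J \<subseteq> S" and r: "r \<in> S" and d: "d \<in> carrier G"
    and min_left: "\<And>a. a \<in> generate G J \<Longrightarrow> word_length d \<le> word_length (a \<otimes> d)"
    and min_right: "word_length d \<le> word_length (d \<otimes> r)"
    and conj: "d \<otimes> r \<otimes> inv d \<in> generate G J"
  shows "d \<otimes> r \<otimes> inv d \<in> J"
proof -
  define c where "c = d \<otimes> r \<otimes> inv d"
  have "word_length (d \<otimes> r) = Suc (word_length d)"
    using word_length_mult_gen[OF d r] min_right by auto
  moreover have "c \<otimes> d = d \<otimes> r" using d r by (simp add: c_def m_assoc)
  ultimately have "word_length c = 1"
    using word_length_mult_minimal_coset_rep[OF J d min_left conj[folded c_def]] by simp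
  moreover obtain xs where "set xs \<subseteq> J" "reduced_word xs" "list_prod G xs = c"
    using obtain_reduced_parabolic_word[OF J conj[folded c_def]] .
  ultimately obtain j where "xs = [j]" "j \<in> J" "c = j"
    by (cases xs) (auto simp: reduced_word_def)
  then show ?thesis using J by (simp add: c_def)
qed

lemma obtain_minimal_double_coset_rep:
  obtains a0 b0 where "a0 \<in> generate G J" "b0 \<in> generate G J'"
    "\<And>a b. a \<in> generate G J \<Longrightarrow> b \<in> generate G J' \<Longrightarrow>
      word_length (a0 \<otimes> y \<otimes> b0) \<le> word_length (a \<otimes> y \<otimes> b)"
proof -
  let ?P = "\<lambda>p. fst p \<in> generate G J \<and> snd p \<in> generate G J'"
  have "?P (\<one>, \<one>)" by (simp add: generate.one)
  then obtain p where "?P p"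
    and "\<forall>q. ?P q \<longrightarrow> word_length (fst p \<otimes> y \<otimes> snd p) \<le> word_length (fst q \<otimes> y \<otimes> snd q)"
    using ex_has_least_nat[of ?P _ "\<lambda>p. word_length (fst p \<otimes> y \<otimes> snd p)"] by blast
  then show ?thesis using that[of "fst p" "snd p"] by force
qed

lemma obtain_conj_into_gens:
  assumes J: "J \<subseteq> S" and J': "J' \<subseteq> S" and y: "y \<in> carrier G"
    and conj: "\<And>r. r \<in> J' \<Longrightarrow> y \<otimes> r \<otimes> inv y \<in> generate G J"
  obtains d where "d \<in> carrier G" "\<And>r. r \<in> J' \<Longrightarrow> d \<otimes> r \<otimes> inv d \<in> J"
proof -
  interpret WJ: subgroup "generate G J" G using parabolic_subgroup[OF J] .
  interpret WJ': subgroup "generate G J'" G using parabolic_subgroup[OF J'] .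
  obtain a0 b0 where ab0: "a0 \<in> generate G J" "b0 \<in> generate G J'"
    and least: "\<And>a b. a \<in> generate G J \<Longrightarrow> b \<in> generate G J' \<Longrightarrow>
      word_length (a0 \<otimes> y \<otimes> b0) \<le> word_length (a \<otimes> y \<otimes> b)"
    using obtain_minimal_double_coset_rep[of J J' y] by blast
  define d where "d = a0 \<otimes> y \<otimes> b0"
  have a0: "a0 \<in> carrier G" and b0: "b0 \<in> carrier G" using ab0 by auto
  have d: "d \<in> carrier G" using a0 b0 y by (simp add: d_def)
  have min_left: "word_length d \<le> word_length (a \<otimes> d)" if "a \<in> generate G J" for a
    using least[of "a \<otimes> a0" b0] that ab0 a0 b0 y by (simp add: d_def m_assoc)
  have "d \<otimes> r \<otimes> inv d \<in> J" if r: "r \<in> J'" for r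
  proof (rule minimal_coset_rep_conj_gen[OF J _ d min_left])
    have rJ': "r \<in> generate G J'" using r by (rule generate.incl)
    then have rc: "r \<in> carrier G" by auto
    show "r \<in> S" using r J' by blast
    have "a0 \<otimes> y \<otimes> (b0 \<otimes> r) = d \<otimes> r" using a0 b0 y rc by (simp add: d_def m_assoc)
    then show "word_length d \<le> word_length (d \<otimes> r)"
      using least[OF ab0(1), of "b0 \<otimes> r"] ab0(2) rJ' by (simp add: d_def)
    have "J' \<subseteq> carrier G" using J' gens_closed by blast
    then have "y \<otimes> (b0 \<otimes> r \<otimes> inv b0) \<otimes> inv y \<in> generate G J"
      using conj_generate_subset[OF parabolic_subgroup[OF J] y _ conj] ab0(2) rJ' by simp
    moreover have "d \<otimes> r \<otimes> inv d = a0 \<otimes> (y \<otimes> (b0 \<otimes> r \<otimes> inv b0) \<otimes> inv y) \<otimes> inv a0"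
      using a0 b0 y rc by (simp add: d_def m_assoc inv_mult_group)
    ultimately show "d \<otimes> r \<otimes> inv d \<in> generate G J"
      using ab0(1) by simp
  qed
  then show ?thesis using that d by blast
qed
end

section \<open>The geometric representation and the order of \<open>s t\<close>\<close>

lemma cis_double_plus_one_sq:
  "(cis (2 * \<theta>) + 1)\<^sup>2 = (2 * complex_of_real (cos \<theta>))\<^sup>2 * cis (2 * \<theta>)"
proof -
  define u where "u = cis \<theta>"
  define v where "v = cis (- \<theta>)"
  have uv: "u * v = 1" and sum: "u + v = 2 * complex_of_real (cos \<theta>)"
    and sq: "cis (2 * \<theta>) = u * u"
    by (simp_all add: u_def v_def cis_mult complex_eq_iff)
  have "cis (2 * \<theta>) + 1 = u * (u + v)" using uv sq by (simp add: algebra_simps)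
  then have "(cis (2 * \<theta>) + 1)\<^sup>2 = u * u * (u + v)\<^sup>2" by (simp add: power2_eq_square algebra_simps)
  then show ?thesis using sum sq by (simp add: algebra_simps)
qed

(* The action of rotation r r' on the pair of coordinates (f r, f r'), where c = cos (\<pi> / m r r'). *)
definition dihedral_step :: "real \<Rightarrow> real \<times> real \<Rightarrow> real \<times> real" where
  "dihedral_step c p = (- fst p - 2 * c * snd p, 2 * c * fst p + (4 * c\<^sup>2 - 1) * snd p)"

lemma dihedral_step_eigenvector:
  fixes \<theta> :: real
  defines "z \<equiv> \<lambda>p. 2 * complex_of_real (cos \<theta>) * complex_of_real (fst p)
                    + (cis (2 * \<theta>) + 1) * complex_of_real (snd p)"
  shows "z ((dihedral_step (cos \<theta>) ^^ k) p) = cis (2 * \<theta>) ^ k * z p"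
proof (induct k)
  case (Suc k)
  define l where "l = cis (2 * \<theta>)"
  define c where "c = complex_of_real (cos \<theta>)"
  have key: "4 * c\<^sup>2 * l - l - 1 = l\<^sup>2 + l"
    using cis_double_plus_one_sq[of \<theta>] by (simp add: l_def c_def power2_eq_square algebra_simps)
  have "z (dihedral_step (cos \<theta>) q) = l * z q" for q
  proof -
    have "(4 * c\<^sup>2 * l - l - 1) * complex_of_real (snd q) = (l\<^sup>2 + l) * complex_of_real (snd q)"
      by (simp only: key)
    then show ?thesis
      by (simp add: z_def dihedral_step_def power2_eq_square algebra_simps l_def c_def)
  qed
  then show ?case using Suc by (simp add: l_def)
qed (simp add: z_def)

lemma dihedral_step_eigenvector_injective:
  fixes n :: nat
  assumes n: "3 \<le> n"
  defines "\<theta> \<equiv> pi / n"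
  assumes eq: "2 * complex_of_real (cos \<theta>) * complex_of_real (fst p) + (cis (2 * \<theta>) + 1) * complex_of_real (snd p)
             = 2 * complex_of_real (cos \<theta>) * complex_of_real (fst q) + (cis (2 * \<theta>) + 1) * complex_of_real (snd q)"
  shows "p = q"
proof -
  have "0 < \<theta>" "\<theta> < pi / 2" "2 * \<theta> < pi"
    using n by (simp_all add: \<theta>_def field_simps)
  then have sin: "0 < sin (2 * \<theta>)" and cos: "0 < cos \<theta>"
    by (simp_all add: sin_gt_zero cos_gt_zero_pi)
  have "sin (2 * \<theta>) * snd p = sin (2 * \<theta>) * snd q"
    using arg_cong[OF eq, of Im] by simp
  then have y: "snd p = snd q" using sin by simp
  have "2 * cos \<theta> * fst p + (cos (2 * \<theta>) + 1) * snd p = 2 * cos \<theta> * fst q + (cos (2 * \<theta>) + 1) * snd q"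
    using arg_cong[OF eq, of Re] by simp
  then have "fst p = fst q" using y cos by simp
  then show ?thesis using y by (simp add: prod_eq_iff)
qed

lemma dihedral_step_period:
  fixes n :: nat
  assumes "2 \<le> n"
  shows "dihedral_step (cos (pi / n)) ^^ n = id"
proof (cases "n = 2")
  case True
  then show ?thesis by (simp add: fun_eq_iff dihedral_step_def numeral_2_eq_2)
next
  case False
  then have n: "3 \<le> n" using assms by simp
  have "cis (2 * (pi / n)) ^ n = 1" using n by (simp add: DeMoivre)
  then have "(dihedral_step (cos (pi / n)) ^^ n) p = p" for p
    using dihedral_step_eigenvector[of "pi / n" n p] by (intro dihedral_step_eigenvector_injective[OF n]) simp
  then show ?thesis by auto
qed

lemma dihedral_step_not_return:
  fixes n k :: nat
  assumes "2 \<le> n" "0 < k" "k < n"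
  shows "(dihedral_step (cos (pi / n)) ^^ k) (1, 0) \<noteq> (1, 0)"
proof (cases "n = 2")
  case True
  then have "k = 1" using assms by simp
  then show ?thesis using True by (simp add: dihedral_step_def)
next
  case False
  then have n: "3 \<le> n" using assms by simp
  have ne1: "cis (2 * (pi / n)) ^ k \<noteq> 1"
  proof
    assume "cis (2 * (pi / n)) ^ k = 1"
    then have "Re (cis (real k * (2 * pi / n))) = 1" by (simp add: DeMoivre)
    then have "cos (real k * (2 * pi / n)) = 1" by simp
    then obtain N :: int where "real k * (2 * pi / n) = of_int N * 2 * pi"
      using cos_one_2pi_int by blast
    then have "real k / n = N" using n by (simp add: field_simps)
    moreover have "0 < real k / n" "real k / n < 1" using assms by auto
    ultimately show False by (metis of_int_0_less_iff of_int_less_1_iff not_le zero_less_one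
      int_one_le_iff_zero_less)
  qed
  have "0 < pi / n" "pi / n < pi / 2" using n by (simp_all add: field_simps)
  then have "0 < cos (pi / n)" by (simp add: cos_gt_zero_pi)
  then show ?thesis
    using dihedral_step_eigenvector[of "pi / n" k "(1, 0)"] ne1 by auto
qed

context coxeter_group
begin

definition coxeter_form :: "'w \<Rightarrow> 'w \<Rightarrow> real" where
  "coxeter_form r j = (if m r j = \<infinity> then - 1 else - cos (pi / the_enat (m r j)))"

(* f \<mapsto> f \<circ> \<sigma>\<^sub>r for Tits' reflection \<sigma>\<^sub>r e\<^sub>j = e\<^sub>j - 2 (coxeter_form r j) e\<^sub>r, a linear form f
   being given by its values on the basis (e\<^sub>j). *)
definition geometric_refl :: "'w \<Rightarrow> ('w \<Rightarrow> real) \<Rightarrow> 'w \<Rightarrow> real" where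
  "geometric_refl r f = (\<lambda>j. f j - 2 * coxeter_form r j * f r)"

lemma coxeter_form_self: "r \<in> S \<Longrightarrow> coxeter_form r r = 1"
  by (simp add: coxeter_form_def m_diag one_enat_def)

lemma coxeter_form_sym: "r \<in> S \<Longrightarrow> j \<in> S \<Longrightarrow> coxeter_form r j = coxeter_form j r"
  by (simp add: coxeter_form_def m_sym)

lemma geometric_refl_involution: "r \<in> S \<Longrightarrow> geometric_refl r (geometric_refl r f) = f"
  by (simp add: geometric_refl_def coxeter_form_self)

lemma geometric_refl_Bij: "r \<in> S \<Longrightarrow> geometric_refl r \<in> Bij UNIV"
  using geometric_refl_involution[of r]
  by (auto simp: Bij_def intro!: bij_betw_byWitness[where f'="geometric_refl r"])

definition rotation :: "'w \<Rightarrow> 'w \<Rightarrow> ('w \<Rightarrow> real) \<Rightarrow> 'w \<Rightarrow> real" where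
  "rotation r r' f = geometric_refl r (geometric_refl r' f)"

context
  fixes r r' n
  assumes r: "r \<in> S" and r': "r' \<in> S" and distinct: "r \<noteq> r'" and m_eq: "m r r' = enat n"
begin

lemma pair_order_ge_2: "2 \<le> n"
  using m_ge_2[OF r r' distinct] m_eq by (simp add: numeral_eq_enat)

lemma coxeter_form_pair: "coxeter_form r r' = - cos (pi / n)" "coxeter_form r' r = - cos (pi / n)"
  using m_eq coxeter_form_sym[OF r r'] by (simp_all add: coxeter_form_def)

lemma rotation_coords:
  "(rotation r r' f r, rotation r r' f r') = dihedral_step (cos (pi / n)) (f r, f r')"
  using coxeter_form_self[OF r] coxeter_form_self[OF r'] coxeter_form_pair
  by (simp add: rotation_def geometric_refl_def dihedral_step_def power2_eq_square algebra_simps)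

lemma rotation_apply:
  "rotation r r' f j = f j - 2 * coxeter_form r j * f r
     - (2 * coxeter_form r' j + 4 * cos (pi / n) * coxeter_form r j) * f r'"
  using coxeter_form_self[OF r'] coxeter_form_pair
  by (simp add: rotation_def geometric_refl_def algebra_simps)

lemma rotation_funpow_coords:
  "((rotation r r' ^^ k) f r, (rotation r r' ^^ k) f r') = (dihedral_step (cos (pi / n)) ^^ k) (f r, f r')"
proof (induct k)
  case (Suc k)
  then show ?case using rotation_coords[of "(rotation r r' ^^ k) f"] by simp
qed simp

lemma rotation_funpow_affine: "\<exists>\<alpha> \<beta>. \<forall>f j. (rotation r r' ^^ k) f j = f j + \<alpha> j * f r + \<beta> j * f r'"
proof (induct k)
  case 0 show ?case by (intro exI[of _ "\<lambda>_. 0"]) simp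
next
  case (Suc k)
  then obtain \<alpha> \<beta> where ab: "\<And>f j. (rotation r r' ^^ k) f j = f j + \<alpha> j * f r + \<beta> j * f r'" by blast
  define \<alpha>' where "\<alpha>' j = - 2 * coxeter_form r j" for j
  define \<beta>' where "\<beta>' j = - 2 * coxeter_form r' j - 4 * cos (pi / n) * coxeter_form r j" for j
  have "rotation r r' f j = f j + \<alpha>' j * f r + \<beta>' j * f r'" for f j
    by (simp add: rotation_apply \<alpha>'_def \<beta>'_def algebra_simps)
  then have "(rotation r r' ^^ Suc k) f j = (rotation r r' ^^ k) f j
      + \<alpha>' j * (rotation r r' ^^ k) f r + \<beta>' j * (rotation r r' ^^ k) f r'" for f j
    by simp
  then show ?case
    by (intro exI[of _ "\<lambda>j. \<alpha> j + \<alpha>' j * (1 + \<alpha> r) + \<beta>' j * \<alpha> r'"]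
        exI[of _ "\<lambda>j. \<beta> j + \<alpha>' j * \<beta> r + \<beta>' j * (1 + \<beta> r')"])
      (simp add: ab algebra_simps)
qed

(* rotation r r' ^^ n fixes the coordinates r, r' and adds to every other coordinate a fixed
   combination of them; commuting with rotation r r' makes this combination invariant under
   dihedral_step, hence zero as c\<^sup>2 < 1. *)
lemma rotation_period: "rotation r r' ^^ n = id"
proof -
  let ?A = "rotation r r'"
  obtain \<alpha> \<beta> where ab: "\<And>f j. (?A ^^ n) f j = f j + \<alpha> j * f r + \<beta> j * f r'"
    using rotation_funpow_affine by blast
  have fixed: "(?A ^^ n) f r = f r" "(?A ^^ n) f r' = f r'" for f
    using rotation_funpow_coords[of n f] dihedral_step_period[OF pair_order_ge_2] by simp_all
  have invariant: "\<alpha> j * ?A f r + \<beta> j * ?A f r' = \<alpha> j * f r + \<beta> j * f r'" for f j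
  proof -
    have "(?A ^^ n) (?A f) j = ?A ((?A ^^ n) f) j" by (simp add: funpow_swap1)
    then show ?thesis using ab[of "?A f" j] ab[of f j] fixed[of f] by (simp add: rotation_apply)
  qed
  have "\<alpha> j = 0 \<and> \<beta> j = 0" for j
  proof -
    define c where "c = cos (pi / n)"
    have "0 < pi / n" "pi / n < pi" using pair_order_ge_2 by (simp_all add: field_simps)
    then have "0 < sin (pi / n)" by (rule sin_gt_zero)
    then have "0 < (sin (pi / n))\<^sup>2" by simp
    then have "c\<^sup>2 < 1" using sin_cos_squared_add[of "pi / n"] unfolding c_def by linarith
    have "\<alpha> j = \<alpha> j * (- 1) + \<beta> j * (2 * c)"
      using invariant[where f="\<lambda>i. if i = r then 1 else 0" and j=j] rotation_coords[of "\<lambda>i. if i = r then 1 else 0"]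
        distinct by (simp add: dihedral_step_def c_def)
    moreover have "\<beta> j = \<alpha> j * (- 2 * c) + \<beta> j * (4 * c\<^sup>2 - 1)"
      using invariant[where f="\<lambda>i. if i = r' then 1 else 0" and j=j] rotation_coords[of "\<lambda>i. if i = r' then 1 else 0"]
        distinct by (simp add: dihedral_step_def c_def)
    ultimately have "\<alpha> j = c * \<beta> j" "(2 - 2 * c\<^sup>2) * \<beta> j = 0"
      by (simp_all add: algebra_simps power2_eq_square)
    then show ?thesis using \<open>c\<^sup>2 < 1\<close> by simp
  qed
  then show ?thesis using ab by (simp add: fun_eq_iff)
qed

lemma rotation_funpow_not_id:
  assumes "0 < k" "k < n"
  shows "rotation r r' ^^ k \<noteq> id"
proof
  assume "rotation r r' ^^ k = id"
  then have "(dihedral_step (cos (pi / n)) ^^ k) (1, 0) = (1, 0)"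
    using rotation_funpow_coords[of k "\<lambda>i. if i = r then 1 else 0"] distinct by simp
  then show False using dihedral_step_not_return[OF pair_order_ge_2 assms] by simp
qed

end

lemma geometric_relations: "coxeter_relations_hold (BijGroup UNIV) S m geometric_refl"
  unfolding coxeter_relations_hold_def
proof (intro ballI impI)
  fix r r' assume rr': "r \<in> S" "r' \<in> S" "m r r' \<noteq> \<infinity>"
  then obtain n where n: "m r r' = enat n" by auto
  have prod: "geometric_refl r \<otimes>\<^bsub>BijGroup UNIV\<^esub> geometric_refl r' = rotation r r'"
    using rr' by (simp add: BijGroup_UNIV_mult geometric_refl_Bij rotation_def fun_eq_iff)
  have "rotation r r' \<in> Bij UNIV"
    using rr' group.is_monoid[OF group_BijGroup] prod[symmetric] geometric_refl_Bij
    by (metis monoid.m_closed carrier_BijGroup)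
  moreover have "rotation r r' ^^ n = id"
  proof (cases "r = r'")
    case True
    then have "n = 1" using n m_diag rr' by (simp add: one_enat_def)
    then show ?thesis using True rr' by (simp add: rotation_def geometric_refl_involution fun_eq_iff)
  next
    case False
    then show ?thesis using rotation_period[OF rr'(1,2) False n] by simp
  qed
  ultimately show "(geometric_refl r \<otimes>\<^bsub>BijGroup UNIV\<^esub> geometric_refl r') [^]\<^bsub>BijGroup UNIV\<^esub>
      the_enat (m r r') = \<one>\<^bsub>BijGroup UNIV\<^esub>"
    using n by (simp add: prod BijGroup_UNIV_pow BijGroup_UNIV_one)
qed

lemma elem_order_gen_pair:
  assumes s: "s \<in> S" and t: "t \<in> S" and distinct: "s \<noteq> t" and finite: "m s t \<noteq> \<infinity>"
  shows "elem_order G (s \<otimes> t) = m s t"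
proof -
  obtain n where n: "m s t = enat n" using finite by auto
  obtain \<rho> where \<rho>: "\<rho> \<in> hom G (BijGroup UNIV)" "\<And>r. r \<in> S \<Longrightarrow> \<rho> r = geometric_refl r"
    using universal_property[OF group_BijGroup _ geometric_relations] geometric_refl_Bij by auto
  interpret \<rho>: group_hom G "BijGroup UNIV" \<rho>
    using \<rho>(1) by (simp add: group_hom_def group_hom_axioms_def is_group group_BijGroup)
  have \<rho>_pow: "\<rho> ((s \<otimes> t) [^] k) = rotation s t ^^ k" for k :: nat
  proof -
    have "\<rho> (s \<otimes> t) = geometric_refl s \<otimes>\<^bsub>BijGroup UNIV\<^esub> geometric_refl t"
      using s t \<rho>(2) by simp
    also have "\<dots> = rotation s t"
      using s t geometric_refl_Bij by (simp add: BijGroup_UNIV_mult rotation_def fun_eq_iff)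
    finally have \<rho>_st: "\<rho> (s \<otimes> t) = rotation s t" .
    have "rotation s t \<in> Bij UNIV"
      using \<rho>.hom_closed[of "s \<otimes> t"] s t unfolding \<rho>_st by simp
    moreover have "\<rho> ((s \<otimes> t) [^] k) = \<rho> (s \<otimes> t) [^]\<^bsub>BijGroup UNIV\<^esub> k"
      using s t by (intro \<rho>.hom_nat_pow) simp
    ultimately show ?thesis unfolding \<rho>_st by (simp add: BijGroup_UNIV_pow)
  qed
  have "(s \<otimes> t) [^] k \<noteq> \<one>" if "0 < k" "k < n" for k
    using rotation_funpow_not_id[OF s t distinct n that] \<rho>_pow[of k] by (auto simp: BijGroup_UNIV_one)
  then show ?thesis
    using elem_order_eqI[of "s \<otimes> t" n] pair_order_ge_2[OF s t distinct n] coxeter_relation[OF s t n] s t n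
    by simp
qed

end

context coxeter_group
begin

lemma m_conj_invariant:
  assumes s: "s \<in> S" "t \<in> S" "s \<noteq> t" "m s t \<noteq> \<infinity>"
    and r: "r \<in> S" "r' \<in> S" "r \<noteq> r'" "m r r' \<noteq> \<infinity>"
    and d: "d \<in> carrier G" and conj: "d \<otimes> r \<otimes> inv d = s" "d \<otimes> r' \<otimes> inv d = t"
  shows "m s t = m r r'"
proof -
  have "s \<otimes> t = d \<otimes> (r \<otimes> r') \<otimes> inv d"
    using r d by (simp add: conj[symmetric] m_assoc)
  then have "elem_order G (s \<otimes> t) = elem_order G (r \<otimes> r')"
    using elem_order_conj[OF d, of "r \<otimes> r'"] r by simp
  then show ?thesis
    using elem_order_gen_pair[OF s] elem_order_gen_pair[OF r] by simp
qed

lemma m_eq_of_conj_into_pair: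
  assumes st: "(s, t) \<in> coxM S m" and st': "(s', t') \<in> coxM S m" and d: "d \<in> carrier G"
    and into: "d \<otimes> s' \<otimes> inv d \<in> {s, t}" "d \<otimes> t' \<otimes> inv d \<in> {s, t}"
  shows "m s t = m s' t'"
proof -
  have s: "s \<in> S" "t \<in> S" "s \<noteq> t" "m s t \<noteq> \<infinity>"
    and s': "s' \<in> S" "t' \<in> S" "s' \<noteq> t'" "m s' t' \<noteq> \<infinity>"
    using st st' by (auto simp: coxM_def)
  have "d \<otimes> s' \<otimes> inv d \<noteq> d \<otimes> t' \<otimes> inv d"
    using s' d by simp
  then consider "d \<otimes> s' \<otimes> inv d = s" "d \<otimes> t' \<otimes> inv d = t"
    | "d \<otimes> s' \<otimes> inv d = t" "d \<otimes> t' \<otimes> inv d = s"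
    using into by auto
  then show ?thesis
  proof cases
    case 1 then show ?thesis using m_conj_invariant[OF s s' d] by blast
  next
    case 2 then show ?thesis
      using m_conj_invariant[of t s, OF s(2,1) _ _ s' d] s m_sym by auto
  qed
qed

lemma elem_order_conj_gens:
  assumes st: "(s, t) \<in> coxM S m" and x: "x \<in> carrier G"
  shows "elem_order G ((x \<otimes> s \<otimes> inv x) \<otimes> (x \<otimes> t \<otimes> inv x)) = m s t"
proof -
  have s: "s \<in> S" "t \<in> S" "s \<noteq> t" "m s t \<noteq> \<infinity>" using st by (auto simp: coxM_def)
  have "(x \<otimes> s \<otimes> inv x) \<otimes> (x \<otimes> t \<otimes> inv x) = x \<otimes> (s \<otimes> t) \<otimes> inv x"
    using x s by (simp add: m_assoc)
  then show ?thesis using elem_order_conj[OF x, of "s \<otimes> t"] elem_order_gen_pair[OF s] s by simp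
qed

lemma m_eq_elem_order_conj_dihedral:
  assumes st: "(s, t) \<in> coxM S m" and uv: "(u, v) \<in> coxN G S m" and q: "q \<in> carrier G"
    and u_in: "u \<in> conj_set G q (dihedral_sub G s t)" and v_in: "v \<in> conj_set G q (dihedral_sub G s t)"
  shows "m s t = elem_order G (u \<otimes> v)"
proof -
  obtain x s' t' where x: "x \<in> carrier G" and st': "(s', t') \<in> coxM S m"
    and u: "u = x \<otimes> s' \<otimes> inv x" and v: "v = x \<otimes> t' \<otimes> inv x"
    using uv unfolding coxN_def by blast
  have J: "{s, t} \<subseteq> S" "{s', t'} \<subseteq> S" using st st' by (auto simp: coxM_def)
  have "inv q \<otimes> x \<otimes> r \<otimes> inv (inv q \<otimes> x) \<in> generate G {s, t}" if "r \<in> {s', t'}" for r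
    using that conj_set_memD[OF q _ u_in] conj_set_memD[OF q _ v_in]
      parabolic_subgroup[OF J(1)] J(2) x q
    by (auto simp: u v dihedral_sub_def subgroup.subset m_assoc inv_mult_group)
  then obtain d where "d \<in> carrier G" "\<And>r. r \<in> {s', t'} \<Longrightarrow> d \<otimes> r \<otimes> inv d \<in> {s, t}"
    using obtain_conj_into_gens[OF J] x q by (metis inv_closed m_closed)
  then have "m s t = m s' t'" using m_eq_of_conj_into_pair[OF st st'] by blast
  then show ?thesis using elem_order_conj_gens[OF st' x] by (simp add: u v)
qed

end

theorem lemma4p3:
  fixes G :: "('w, 'x) monoid_scheme" and S :: "'w set" and m :: "'w \<Rightarrow> 'w \<Rightarrow> enat"
  assumes "coxeter_system G S m"
    and "(s, t) \<in> coxM S m"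
    and "(u, v) \<in> coxN G S m"
    and "q \<in> carrier G"
    and "u \<in> conj_set G q (dihedral_sub G s t)"
    and "v \<in> conj_set G q (dihedral_sub G s t)"
  shows "m s t = elem_order G (u \<otimes>\<^bsub>G\<^esub> v)"
  using assms(2-) by (rule coxeter_group.m_eq_elem_order_conj_dihedral[OF coxeter_group.intro, OF assms(1)])

end
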